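(* Let $a>0$, $q\neq0$, $p\in(4,6)$. For every $u\in\mathcal{M}_{a,r}$, $I_a(u)=\max_{t>0}I_a(t^2u(t\,\cdot))$.
   Context: $D^{1,2}(\mathbb{R}^3)=\{u\in L^6(\mathbb{R}^3):|\nabla u|\in L^2(\mathbb{R}^3)\}$. $\mathcal{K}_a(x)=\frac{1-e^{-|x|/a}}{|x|}$, $V(f,g)=\int\int\mathcal{K}_a(x-y)f(x)g(y)\,dx\,dy$, $\mathcal{E}_r$ the set of radial $u\in D^{1,2}(\mathbb{R}^3)$ with $V(u^2,u^2)<\infty$. $I_a(u)=\frac12\|\nabla u\|_2^2+\frac{q^2}{4}V(u^2,u^2)-\frac1p\|u\|_p^p$, $$J_a(u)=\frac32\|\nabla u\|_2^2-\frac{2p-3}{p}\|u\|_p^p+\frac{3q^2}{4}\int_{\mathbb{R}^3}\int_{\mathbb{R}^3}\frac{1-e^{-\frac{|x-y|}{a}}-\frac{|x-y|}{3a}e^{-\frac{|x-y|}{a}}}{|x-y|}u^2(x)u^2(y)\,dx\,dy,$$ and $\mathcal{M}_{a,r}=\{u\in\mathcal{E}_r\setminus\{0\}:J_a(u)=0\}$. *)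

theory Defs
  imports "HOL-Analysis.Analysis"
begin

type_synonym R3 = "real ^ 3"

definition test_fun :: "(R3 \<Rightarrow> real) \<Rightarrow> (R3 \<Rightarrow> R3 \<Rightarrow> real) \<Rightarrow> bool" where
  "test_fun \<phi> D \<longleftrightarrow> (\<forall>x. (\<phi> has_derivative D x) (at x))
      \<and> (\<forall>v. continuous_on UNIV (\<lambda>x. D x v))
      \<and> compact (closure {x. \<phi> x \<noteq> 0})"

definition weak_grad :: "(R3 \<Rightarrow> real) \<Rightarrow> (R3 \<Rightarrow> R3) \<Rightarrow> bool" where
  "weak_grad u G \<longleftrightarrow> G \<in> borel_measurable lebesgue \<and>
     (\<forall>\<phi> D. test_fun \<phi> D \<longrightarrow> (\<forall>i.
        integrable lebesgue (\<lambda>x. u x * D x (axis i 1)) \<and>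
        integrable lebesgue (\<lambda>x. G x $ i * \<phi> x) \<and>
        (LINT x|lebesgue. u x * D x (axis i 1)) = - (LINT x|lebesgue. G x $ i * \<phi> x)))"

definition D12 :: "(R3 \<Rightarrow> real) set" where
  "D12 = {u. u \<in> borel_measurable lebesgue \<and> integrable lebesgue (\<lambda>x. \<bar>u x\<bar> ^ 6) \<and>
            (\<exists>G. weak_grad u G \<and> integrable lebesgue (\<lambda>x. (norm (G x))\<^sup>2))}"

definition grad_sq :: "(R3 \<Rightarrow> real) \<Rightarrow> real" where
  "grad_sq u = (LINT x|lebesgue. (norm ((SOME G. weak_grad u G \<and>
                  integrable lebesgue (\<lambda>x. (norm (G x))\<^sup>2)) x))\<^sup>2)"

definition Lp_pow :: "real \<Rightarrow> (R3 \<Rightarrow> real) \<Rightarrow> real" where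
  "Lp_pow p u = (LINT x|lebesgue. \<bar>u x\<bar> powr p)"

definition Kker :: "real \<Rightarrow> R3 \<Rightarrow> real" where
  "Kker a x = (1 - exp (- norm x / a)) / norm x"

definition Lker :: "real \<Rightarrow> R3 \<Rightarrow> real" where
  "Lker a x = (1 - exp (- norm x / a) - norm x / (3 * a) * exp (- norm x / a)) / norm x"

definition Vnn :: "real \<Rightarrow> (R3 \<Rightarrow> real) \<Rightarrow> (R3 \<Rightarrow> real) \<Rightarrow> ennreal" where
  "Vnn a f g = (\<integral>\<^sup>+ x. (\<integral>\<^sup>+ y. ennreal (Kker a (x - y) * f x * g y) \<partial>lebesgue) \<partial>lebesgue)"

definition V :: "real \<Rightarrow> (R3 \<Rightarrow> real) \<Rightarrow> (R3 \<Rightarrow> real) \<Rightarrow> real" where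
  "V a f g = (LINT x|lebesgue. LINT y|lebesgue. Kker a (x - y) * f x * g y)"

definition W :: "real \<Rightarrow> (R3 \<Rightarrow> real) \<Rightarrow> (R3 \<Rightarrow> real) \<Rightarrow> real" where
  "W a f g = (LINT x|lebesgue. LINT y|lebesgue. Lker a (x - y) * f x * g y)"

definition radial :: "(R3 \<Rightarrow> real) \<Rightarrow> bool" where
  "radial u \<longleftrightarrow> (\<forall>x y. norm x = norm y \<longrightarrow> u x = u y)"

definition E_r :: "real \<Rightarrow> (R3 \<Rightarrow> real) set" where
  "E_r a = {u \<in> D12. radial u \<and> Vnn a (\<lambda>x. (u x)\<^sup>2) (\<lambda>x. (u x)\<^sup>2) < \<infinity>}"

definition I_a :: "real \<Rightarrow> real \<Rightarrow> real \<Rightarrow> (R3 \<Rightarrow> real) \<Rightarrow> real" where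
  "I_a a q p u = 1/2 * grad_sq u + q\<^sup>2 / 4 * V a (\<lambda>x. (u x)\<^sup>2) (\<lambda>x. (u x)\<^sup>2) - 1/p * Lp_pow p u"

definition J_a :: "real \<Rightarrow> real \<Rightarrow> real \<Rightarrow> (R3 \<Rightarrow> real) \<Rightarrow> real" where
  "J_a a q p u = 3/2 * grad_sq u - (2*p - 3)/p * Lp_pow p u
                 + 3 * q\<^sup>2 / 4 * W a (\<lambda>x. (u x)\<^sup>2) (\<lambda>x. (u x)\<^sup>2)"

definition M_ar :: "real \<Rightarrow> real \<Rightarrow> real \<Rightarrow> (R3 \<Rightarrow> real) set" where
  "M_ar a q p = {u \<in> E_r a. u \<noteq> (\<lambda>x. 0) \<and> J_a a q p u = 0}"

definition dil :: "real \<Rightarrow> (R3 \<Rightarrow> real) \<Rightarrow> R3 \<Rightarrow> real" where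
  "dil t u = (\<lambda>x. t\<^sup>2 * u (t *\<^sub>R x))"

end

theory Submission
  imports Defs
begin

text \<open>
  Write u_t = dil t u. The three terms of I_a scale as
  grad_sq u_t = t^3 grad_sq u, Lp_pow p u_t = t^(2p-3) Lp_pow p u and
  V_a(u_t^2, u_t^2) = t^3 V_(at)(u^2, u^2); the first identity needs the uniqueness of weak
  gradients, i.e. the fundamental lemma of the calculus of variations. Eliminating Lp_pow p u
  by J_a u = 0 and putting m = 2p - 3, c(t) = 3 (1 - t^m) / m gives
    I_a u - I_a u_t = grad_sq u * ((1 - t^3) / 2 - c(t) / 2)
      + q^2/4 * (double integral of (K_a - t^3 K_(at) - c(t) L_a)(x - y) u^2(x) u^2(y)),
  where L_a = Lker is the kernel of the J_a term. The coefficient of grad_sq u and, for each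
  fixed |x - y|, the kernel combination are functions of t that vanish at t = 1, decrease on
  (0, 1) and increase on (1, infinity) as soon as m >= 3; so both are nonnegative.
\<close>

section \<open>Dilations of Lebesgue measure\<close>

lemma lebesgue_scaleR:
  fixes c :: real
  assumes "c \<noteq> 0"
  shows "lebesgue = density (distr lebesgue lebesgue (\<lambda>x::'a::euclidean_space. c *\<^sub>R x))
                       (\<lambda>_. ennreal (\<bar>c\<bar> ^ DIM('a)))"
proof -
  have eq: "(\<lambda>x::'a. 0 + (\<Sum>j\<in>Basis. (c * (x \<bullet> j)) *\<^sub>R j)) = (\<lambda>x. c *\<^sub>R x)"
    unfolding scaleR_scaleR[symmetric] scaleR_sum_right[symmetric]
    by (simp add: euclidean_representation)
  show ?thesis
    using lebesgue_affine_euclidean[of "\<lambda>_::'a. c" 0] assms unfolding eq prod_constant by blast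
qed

lemma borel_measurable_scaleR_iff:
  fixes f :: "'a::euclidean_space \<Rightarrow> real"
  assumes "c \<noteq> 0"
  shows "(\<lambda>x. f (c *\<^sub>R x)) \<in> borel_measurable lebesgue \<longleftrightarrow> f \<in> borel_measurable lebesgue"
proof
  assume "(\<lambda>x. f (c *\<^sub>R x)) \<in> borel_measurable lebesgue"
  from measurable_compose[OF lebesgue_measurable_scaling this, of "inverse c"]
  show "f \<in> borel_measurable lebesgue"
    using assms by simp
qed (rule measurable_compose[OF lebesgue_measurable_scaling])

lemma
  fixes f :: "'a::euclidean_space \<Rightarrow> real"
  assumes c: "c \<noteq> 0"
  shows integrable_scaleR_iff: "integrable lebesgue (\<lambda>x. f (c *\<^sub>R x)) \<longleftrightarrow> integrable lebesgue f"
    and integral_scaleR: "(\<integral>x. f x \<partial>lebesgue) = \<bar>c\<bar> ^ DIM('a) * (\<integral>x. f (c *\<^sub>R x) \<partial>lebesgue)"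
proof -
  let ?D = "density (distr lebesgue lebesgue ((*\<^sub>R) c :: 'a \<Rightarrow> 'a)) (\<lambda>_. ennreal (\<bar>c\<bar> ^ DIM('a)))"
  have leb: "lebesgue = ?D"
    by (rule lebesgue_scaleR[OF c])
  have "(integrable lebesgue (\<lambda>x. f (c *\<^sub>R x)) \<longleftrightarrow> integrable lebesgue f)
      \<and> (\<integral>x. f x \<partial>lebesgue) = \<bar>c\<bar> ^ DIM('a) * (\<integral>x. f (c *\<^sub>R x) \<partial>lebesgue)"
  proof (cases "f \<in> borel_measurable lebesgue")
    case f: True
    have "integrable lebesgue f \<longleftrightarrow> integrable ?D f"
      by (simp only: leb[symmetric])
    also have "\<dots> \<longleftrightarrow> integrable (distr lebesgue lebesgue ((*\<^sub>R) c)) (\<lambda>x. \<bar>c\<bar> ^ DIM('a) *\<^sub>R f x)"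
      using f by (subst integrable_density) auto
    also have "\<dots> \<longleftrightarrow> integrable lebesgue (\<lambda>x. f (c *\<^sub>R x))"
      using f c by (subst integrable_distr_eq) auto
    finally have int: "integrable lebesgue (\<lambda>x. f (c *\<^sub>R x)) \<longleftrightarrow> integrable lebesgue f" ..
    have "(\<integral>x. f x \<partial>lebesgue) = (\<integral>x. f x \<partial>?D)"
      by (simp only: leb[symmetric])
    also have "\<dots> = (\<integral>x. \<bar>c\<bar> ^ DIM('a) *\<^sub>R f x \<partial>distr lebesgue lebesgue ((*\<^sub>R) c))"
      using f by (subst integral_density) auto
    also have "\<dots> = \<bar>c\<bar> ^ DIM('a) * (\<integral>x. f (c *\<^sub>R x) \<partial>lebesgue)"
      using f by (subst integral_distr) auto
    finally show ?thesis using int by blast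
  next
    case False
    then have "\<not> integrable lebesgue f" "\<not> integrable lebesgue (\<lambda>x. f (c *\<^sub>R x))"
      using borel_measurable_scaleR_iff[OF c, of f] borel_measurable_integrable by blast+
    then show ?thesis by (simp add: not_integrable_integral_eq)
  qed
  then show "integrable lebesgue (\<lambda>x. f (c *\<^sub>R x)) \<longleftrightarrow> integrable lebesgue f"
    and "(\<integral>x. f x \<partial>lebesgue) = \<bar>c\<bar> ^ DIM('a) * (\<integral>x. f (c *\<^sub>R x) \<partial>lebesgue)"
    by auto
qed

section \<open>Uniqueness of weak gradients\<close>

lemma has_real_derivative_max0_square:
  "((\<lambda>y::real. (max 0 y)\<^sup>2) has_real_derivative 2 * max 0 y) (at y)"
proof (cases y "0::real" rule: linorder_cases)
  case less
  have "((\<lambda>y. (max 0 y)\<^sup>2) has_real_derivative 0) (at y)"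
    by (rule has_field_derivative_transform_within_open[where S="{..<0}", OF DERIV_const])
      (use less in auto)
  then show ?thesis using less by simp
next
  case equal
  have "((\<lambda>h::real. ((max 0 (0 + h))\<^sup>2 - (max 0 0)\<^sup>2) / h) \<longlongrightarrow> 0) (at 0)"
  proof (rule Lim_null_comparison)
    show "\<forall>\<^sub>F h in at 0. norm (((max 0 (0 + h))\<^sup>2 - (max 0 0)\<^sup>2) / h) \<le> \<bar>h\<bar>"
      by (intro always_eventually allI) (auto simp: max_def abs_if power2_eq_square divide_simps)
    show "((\<lambda>h::real. \<bar>h\<bar>) \<longlongrightarrow> 0) (at 0)"
      using tendsto_rabs[OF tendsto_ident_at[of "0::real" UNIV]] by simp
  qed
  then show ?thesis using equal by (simp add: DERIV_def)
next
  case greater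
  have "((\<lambda>y. y\<^sup>2) has_real_derivative 2 * max 0 y) (at y)"
    using greater by (auto intro!: derivative_eq_intros)
  then show ?thesis
    by (rule has_field_derivative_transform_within_open[where S="{0<..}"]) (use greater in auto)
qed

definition bump1 :: "real \<Rightarrow> real \<Rightarrow> real \<Rightarrow> real" where
  "bump1 l h s = (max 0 ((s - l) * (h - s)))\<^sup>2"

definition Dbump1 :: "real \<Rightarrow> real \<Rightarrow> real \<Rightarrow> real" where
  "Dbump1 l h s = 2 * max 0 ((s - l) * (h - s)) * (h + l - 2 * s)"

lemma has_real_derivative_bump1: "(bump1 l h has_real_derivative Dbump1 l h s) (at s)"
proof -
  have "((\<lambda>s. (s - l) * (h - s)) has_real_derivative h + l - 2 * s) (at s)"
    by (auto intro!: derivative_eq_intros)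
  from DERIV_chain2[OF has_real_derivative_max0_square this]
  show ?thesis unfolding bump1_def[abs_def] Dbump1_def by simp
qed

lemma bump1_pos_iff:
  assumes "l \<le> h"
  shows "0 < bump1 l h s \<longleftrightarrow> l < s \<and> s < h"
proof -
  have "0 < (s - l) * (h - s) \<longleftrightarrow> l < s \<and> s < h"
    using assms by (auto simp: zero_less_mult_iff)
  then show ?thesis by (auto simp: bump1_def max_def)
qed

lemma one_le_bump1:
  assumes "l \<le> s" "s \<le> h"
  shows "1 \<le> bump1 (l - 1) (h + 1) s"
proof -
  have "1 \<le> (s - (l - 1)) * (h + 1 - s)"
    using assms by (intro mult_ge1_I) auto
  then show ?thesis by (simp add: bump1_def one_le_power)
qed

definition box_bump :: "real^'n \<Rightarrow> real^'n \<Rightarrow> real^'n \<Rightarrow> real" where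
  "box_bump lo hi x = (\<Prod>i\<in>UNIV. bump1 (lo$i) (hi$i) (x$i))"

definition Dbox_bump :: "real^'n \<Rightarrow> real^'n \<Rightarrow> real^'n \<Rightarrow> real^'n \<Rightarrow> real" where
  "Dbox_bump lo hi x v =
     (\<Sum>i\<in>UNIV. Dbump1 (lo$i) (hi$i) (x$i) * v$i * (\<Prod>j\<in>UNIV-{i}. bump1 (lo$j) (hi$j) (x$j)))"

lemma has_derivative_box_bump: "(box_bump lo hi has_derivative Dbox_bump lo hi x) (at x)"
proof -
  have "((\<lambda>x. bump1 (lo$i) (hi$i) (x$i)) has_derivative (\<lambda>v. Dbump1 (lo$i) (hi$i) (x$i) * v$i)) (at x)"
    for i
    using has_derivative_compose[OF bounded_linear_imp_has_derivative[OF bounded_linear_vec_nth]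
        has_real_derivative_bump1[unfolded has_field_derivative_def]]
    by (simp add: mult.commute)
  then show ?thesis
    unfolding box_bump_def[abs_def] Dbox_bump_def[abs_def] by (rule has_derivative_prod)
qed

lemma continuous_on_box_bump: "continuous_on UNIV (box_bump lo hi)"
  unfolding box_bump_def[abs_def] bump1_def by (intro continuous_intros)

lemma continuous_on_Dbox_bump: "continuous_on UNIV (\<lambda>x. Dbox_bump lo hi x v)"
  unfolding Dbox_bump_def bump1_def Dbump1_def by (intro continuous_intros)

lemma box_bump_nonneg: "0 \<le> box_bump lo hi x"
  unfolding box_bump_def bump1_def by (intro prod_nonneg) auto

lemma box_bump_pos_iff:
  assumes "\<And>i. lo$i \<le> hi$i"
  shows "0 < box_bump lo hi x \<longleftrightarrow> x \<in> box lo hi"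
proof -
  have "0 < box_bump lo hi x \<longleftrightarrow> (\<forall>i. bump1 (lo$i) (hi$i) (x$i) \<noteq> 0)"
    using box_bump_nonneg[of lo hi x] by (simp add: box_bump_def less_le)
  also have "\<dots> \<longleftrightarrow> (\<forall>i. 0 < bump1 (lo$i) (hi$i) (x$i))"
    by (simp add: bump1_def less_le)
  also have "\<dots> \<longleftrightarrow> x \<in> box lo hi"
    using assms by (simp add: bump1_pos_iff mem_box_cart)
  finally show ?thesis .
qed

lemma box_bump_eq_0:
  assumes "\<And>i. lo$i \<le> hi$i" "x \<notin> box lo hi"
  shows "box_bump lo hi x = 0"
proof -
  have "\<not> 0 < box_bump lo hi x"
    using box_bump_pos_iff[of lo hi x] assms by blast
  then show ?thesis using box_bump_nonneg[of lo hi x] by linarith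
qed

lemma one_le_box_bump:
  assumes "x \<in> cbox lo hi"
  shows "1 \<le> box_bump (lo - 1) (hi + 1) x"
  using assms unfolding box_bump_def
  by (intro prod_ge_1) (auto simp: mem_box_cart one_le_bump1)

lemma test_fun_box_bump:
  assumes "\<And>i. lo$i \<le> hi$i"
  shows "test_fun (box_bump lo hi) (Dbox_bump lo hi)"
proof -
  have "{x. box_bump lo hi x \<noteq> 0} \<subseteq> cbox lo hi"
    using box_bump_eq_0[OF assms] box_subset_cbox by blast
  then have "bounded {x. box_bump lo hi x \<noteq> 0}"
    using bounded_cbox bounded_subset by blast
  then show ?thesis
    unfolding test_fun_def using has_derivative_box_bump continuous_on_Dbox_bump compact_closure
    by blast
qed

lemma test_fun_borel_measurable:
  assumes "test_fun \<phi> D"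
  shows "\<phi> \<in> borel_measurable lebesgue"
proof -
  have "continuous_on UNIV \<phi>"
    using assms unfolding test_fun_def
    by (metis continuous_at_imp_continuous_on has_derivative_continuous)
  then have "\<phi> \<in> borel_measurable borel"
    by (rule borel_measurable_continuous_onI)
  then show ?thesis
    by (simp add: measurable_completion)
qed

definition box_approx :: "real \<Rightarrow> R3 \<Rightarrow> R3 \<Rightarrow> R3 \<Rightarrow> real" where
  "box_approx n lo hi x = n * box_bump lo hi x / (1 + n * box_bump lo hi x)"

definition Dbox_approx :: "real \<Rightarrow> R3 \<Rightarrow> R3 \<Rightarrow> R3 \<Rightarrow> R3 \<Rightarrow> real" where
  "Dbox_approx n lo hi x v = n / (1 + n * box_bump lo hi x)\<^sup>2 * Dbox_bump lo hi x v"

lemma box_approx_denom_pos: "0 \<le> n \<Longrightarrow> 0 < 1 + n * box_bump lo hi x"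
  using box_bump_nonneg[of lo hi x] by (simp add: add_pos_nonneg)

lemma test_fun_box_approx:
  assumes n: "0 \<le> n" and ord: "\<And>i. lo$i \<le> hi$i"
  shows "test_fun (box_approx n lo hi) (Dbox_approx n lo hi)"
proof -
  have nz: "1 + n * box_bump lo hi x \<noteq> 0" for x
    using box_approx_denom_pos[OF n] by (metis less_irrefl)
  have "((\<lambda>s. n * s / (1 + n * s)) has_real_derivative n / (1 + n * box_bump lo hi x)\<^sup>2)
      (at (box_bump lo hi x))" for x
    using nz[of x] by (auto intro!: derivative_eq_intros simp: field_simps power2_eq_square)
  from has_derivative_compose[OF has_derivative_box_bump this[unfolded has_field_derivative_def]]
  have "(box_approx n lo hi has_derivative Dbox_approx n lo hi x) (at x)" for x
    unfolding box_approx_def[abs_def] Dbox_approx_def[abs_def] by simp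
  moreover have "continuous_on UNIV (\<lambda>x. Dbox_approx n lo hi x v)" for v
    unfolding Dbox_approx_def
    by (intro continuous_intros continuous_on_Dbox_bump continuous_on_box_bump) (simp add: nz)
  moreover have "{x. box_approx n lo hi x \<noteq> 0} \<subseteq> cbox lo hi"
    using box_bump_eq_0[OF ord] box_subset_cbox by (fastforce simp: box_approx_def)
  then have "bounded {x. box_approx n lo hi x \<noteq> 0}"
    using bounded_cbox bounded_subset by blast
  ultimately show ?thesis
    unfolding test_fun_def using compact_closure by blast
qed

lemma box_approx_bounds:
  assumes "0 \<le> n"
  shows "0 \<le> box_approx n lo hi x" "box_approx n lo hi x \<le> 1"
  using assms box_approx_denom_pos[OF assms, of lo hi x] box_bump_nonneg[of lo hi x]
  by (simp_all add: box_approx_def divide_simps)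

lemma box_approx_tendsto_indicator:
  assumes ord: "\<And>i. lo$i \<le> hi$i"
  shows "(\<lambda>k. box_approx (real k) lo hi x) \<longlonglongrightarrow> indicator (box lo hi) x"
proof (cases "x \<in> box lo hi")
  case True
  define b where "b = box_bump lo hi x"
  have b: "0 < b" using True box_bump_pos_iff[OF ord] b_def by blast
  have "(\<lambda>k. b / (inverse (real k) + b)) \<longlonglongrightarrow> b / (0 + b)"
    using b by (intro tendsto_intros lim_inverse_n) auto
  moreover have "\<forall>\<^sub>F k in sequentially. b / (inverse (real k) + b) = box_approx (real k) lo hi x"
    using eventually_gt_at_top[of "0::nat"]
    by eventually_elim (use b in \<open>simp add: box_approx_def b_def[symmetric] field_simps\<close>)
  ultimately show ?thesis
    using True b by (simp add: tendsto_cong)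
next
  case False
  then show ?thesis by (simp add: box_approx_def box_bump_eq_0[OF ord])
qed

lemma box_approx_le_box_bump:
  assumes "0 \<le> n" and ord: "\<And>i. lo$i \<le> hi$i"
  shows "box_approx n lo hi x \<le> box_bump (lo - 1) (hi + 1) x"
proof (cases "x \<in> box lo hi")
  case True
  then have "1 \<le> box_bump (lo - 1) (hi + 1) x"
    using one_le_box_bump box_subset_cbox by blast
  then show ?thesis
    using box_approx_bounds[OF assms(1), of lo hi x] by linarith
qed (simp add: box_approx_def box_bump_eq_0[OF ord] box_bump_nonneg)

definition test_orthogonal :: "(R3 \<Rightarrow> real) \<Rightarrow> bool" where
  "test_orthogonal g \<longleftrightarrow> (\<forall>\<phi> D. test_fun \<phi> D \<longrightarrow>
     integrable lebesgue (\<lambda>x. g x * \<phi> x) \<and> (LINT x|lebesgue. g x * \<phi> x) = 0)"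

text \<open>Dominated convergence along the test functions box_approx k, which increase to the
  indicator of the box and are dominated by the bump of the enlarged box.\<close>

lemma test_orthogonal_box:
  assumes g: "g \<in> borel_measurable lebesgue" and orth: "test_orthogonal g"
  shows "integrable lebesgue (\<lambda>x. g x * indicator (box lo hi) x)"
    and "(LINT x|lebesgue. g x * indicator (box lo hi) x) = 0"
proof -
  have "integrable lebesgue (\<lambda>x. g x * indicator (box lo hi) x)
      \<and> (LINT x|lebesgue. g x * indicator (box lo hi) x) = 0"
  proof (cases "box lo hi = {}")
    case False
    then have ord: "lo$i \<le> hi$i" for i
      by (auto simp: interval_eq_empty_cart not_le less_imp_le)
    define w where "w x = \<bar>g x * box_bump (lo - 1) (hi + 1) x\<bar>" for x
    define s where "s k x = g x * box_approx (real k) lo hi x" for k x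
    have ord': "(lo - 1)$i \<le> (hi + 1)$i" for i
      using ord[of i] by simp
    have "integrable lebesgue (\<lambda>x. g x * box_bump (lo - 1) (hi + 1) x)"
      using orth test_fun_box_bump[OF ord'] unfolding test_orthogonal_def by blast
    then have w: "integrable lebesgue w"
      unfolding w_def by (rule integrable_abs)
    have s: "s k \<in> borel_measurable lebesgue" for k
    proof -
      have "box_approx (real k) lo hi \<in> borel_measurable lebesgue"
        by (rule test_fun_borel_measurable[OF test_fun_box_approx[OF of_nat_0_le_iff ord]])
      with g show ?thesis unfolding s_def by measurable
    qed
    have lim: "AE x in lebesgue. (\<lambda>k. s k x) \<longlonglongrightarrow> g x * indicator (box lo hi) x"
      unfolding s_def by (intro always_eventually allI tendsto_mult tendsto_const
          box_approx_tendsto_indicator[OF ord])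
    have bound: "AE x in lebesgue. norm (s k x) \<le> w x" for k
    proof (intro always_eventually allI)
      fix x
      have "box_approx (real k) lo hi x \<le> box_bump (lo - 1) (hi + 1) x"
        using box_approx_le_box_bump[OF _ ord] by simp
      then show "norm (s k x) \<le> w x"
        using box_approx_bounds[of "real k" lo hi x] box_bump_nonneg[of "lo - 1" "hi + 1" x]
        unfolding s_def w_def by (simp add: abs_mult mult_left_mono)
    qed
    have gB: "(\<lambda>x. g x * indicator (box lo hi) x) \<in> borel_measurable lebesgue"
      using g by (intro borel_measurable_times borel_measurable_indicator) auto
    have "(\<lambda>k. LINT x|lebesgue. s k x) \<longlonglongrightarrow> (LINT x|lebesgue. g x * indicator (box lo hi) x)"
      by (rule integral_dominated_convergence[OF gB s w lim bound])
    moreover have "(LINT x|lebesgue. s k x) = 0" for k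
      using orth test_fun_box_approx[OF of_nat_0_le_iff[of k] ord] unfolding s_def test_orthogonal_def
      by blast
    ultimately have "(\<lambda>k. 0) \<longlonglongrightarrow> (LINT x|lebesgue. g x * indicator (box lo hi) x)"
      by simp
    then have "(LINT x|lebesgue. g x * indicator (box lo hi) x) = 0"
      by (rule LIMSEQ_unique[OF tendsto_const, symmetric])
    moreover have "integrable lebesgue (\<lambda>x. g x * indicator (box lo hi) x)"
      by (rule integrable_dominated_convergence[OF gB s w lim bound])
    ultimately show ?thesis by blast
  qed simp
  then show "integrable lebesgue (\<lambda>x. g x * indicator (box lo hi) x)"
    and "(LINT x|lebesgue. g x * indicator (box lo hi) x) = 0"
    by blast+
qed

lemma AE_lborel_eq_0_if_box_integrals_eq_0:
  fixes h :: "'a::euclidean_space \<Rightarrow> real"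
  assumes h: "integrable lborel h"
    and box0: "\<And>lo hi. (LINT x|lborel. h x * indicator (box lo hi) x) = 0"
  shows "AE x in lborel. h x = 0"
proof -
  have hm[measurable]: "h \<in> borel_measurable lborel"
    using h by (rule borel_measurable_integrable)
  define M1 where "M1 = density lborel (\<lambda>x. ennreal (h x))"
  define M2 where "M2 = density lborel (\<lambda>x. ennreal (- h x))"
  have emeasure_eq: "emeasure M1 (box lo hi) = emeasure M2 (box lo hi)" for lo hi
  proof -
    let ?k = "\<lambda>x. h x * indicator (box lo hi) x"
    have k: "integrable lborel ?k"
      using integrable_mult_indicator[OF _ h, of "box lo hi"] by (simp add: mult.commute)
    have fin: "(\<integral>\<^sup>+x. ennreal (?k x) \<partial>lborel) < \<infinity>" "(\<integral>\<^sup>+x. ennreal (- ?k x) \<partial>lborel) < \<infinity>"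
      using k unfolding real_integrable_def by (auto simp: less_top)
    have "enn2real (\<integral>\<^sup>+x. ennreal (?k x) \<partial>lborel) = enn2real (\<integral>\<^sup>+x. ennreal (- ?k x) \<partial>lborel)"
      using real_lebesgue_integral_def[OF k] box0[of lo hi] by simp
    then have "(\<integral>\<^sup>+x. ennreal (?k x) \<partial>lborel) = (\<integral>\<^sup>+x. ennreal (- ?k x) \<partial>lborel)"
      using fin ennreal_enn2real_if[of "\<integral>\<^sup>+x. ennreal (?k x) \<partial>lborel"]
        ennreal_enn2real_if[of "\<integral>\<^sup>+x. ennreal (- ?k x) \<partial>lborel"] by auto
    then show ?thesis
      unfolding M1_def M2_def
      by (simp add: emeasure_density nn_integral_set_ennreal)
  qed
  have "M1 = M2"
  proof (rule measure_eqI_generator_eq[where E="range (\<lambda>(a, b). box a b)" and \<Omega>=UNIV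
        and A="\<lambda>n::nat. box (- (real n *\<^sub>R One)) (real n *\<^sub>R One)"])
    show "Int_stable (range (\<lambda>(a, b). box a b :: 'a set))"
      by (auto simp: Int_stable_def box_Int_box)
    show "sets M1 = sigma_sets UNIV (range (\<lambda>(a, b). box a b))"
      "sets M2 = sigma_sets UNIV (range (\<lambda>(a, b). box a b))"
      unfolding M1_def M2_def by (simp_all add: borel_eq_box)
    show "(\<Union>n::nat. box (- (real n *\<^sub>R One)) (real n *\<^sub>R One)) = (UNIV :: 'a set)"
      by (rule UN_box_eq_UNIV)
    have "emeasure M1 UNIV < \<infinity>"
      using h unfolding M1_def real_integrable_def by (simp add: emeasure_density less_top)
    then have "emeasure M1 B < \<infinity>" for B
      by (rule order.strict_trans1[rotated]) (rule emeasure_mono, auto simp: M1_def)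
    then show "emeasure M1 (box (- (real n *\<^sub>R One)) (real n *\<^sub>R One)) \<noteq> \<infinity>" for n :: nat
      by (simp add: less_top)
  qed (use emeasure_eq in auto)
  then have "AE x in lborel. ennreal (h x) = ennreal (- h x)"
    unfolding M1_def M2_def by (intro sigma_finite_measure.density_unique[OF sigma_finite_lborel]) auto
  then show ?thesis
  proof eventually_elim
    case (elim x)
    then show "h x = 0"
      by (cases "h x" "0::real" rule: linorder_cases) (auto simp: ennreal_neg)
  qed
qed

lemma AE_lebesgue_eq_0_if_box_integrals_eq_0:
  fixes h :: "'a::euclidean_space \<Rightarrow> real"
  assumes h: "integrable lebesgue h"
    and box0: "\<And>lo hi. (LINT x|lebesgue. h x * indicator (box lo hi) x) = 0"
  shows "AE x in lebesgue. h x = 0"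
proof -
  obtain h' where h': "h' \<in> borel_measurable lborel" and ae: "AE x in lborel. h x = h' x"
    using completion_ex_borel_measurable_real[of h lborel] h borel_measurable_integrable by auto
  have ae': "AE x in lebesgue. h x = h' x"
    by (rule AE_completion[OF ae])
  have hI: "(\<lambda>x. h' x * indicator (box lo hi) x) \<in> borel_measurable lborel" for lo hi
    using h' by (intro borel_measurable_times borel_measurable_indicator) auto
  have "AE x in lborel. h' x = 0"
  proof (rule AE_lborel_eq_0_if_box_integrals_eq_0)
    have "integrable lebesgue h'"
      using h integrable_cong_AE[OF borel_measurable_integrable[OF h] measurable_completion[OF h'] ae']
      by simp
    then show "integrable lborel h'"
      using integrable_completion[OF h'] by simp
    have "(LINT x|lebesgue. h' x * indicator (box lo hi) x) = (LINT x|lebesgue. h x * indicator (box lo hi) x)"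
      for lo hi
      using ae' by (intro integral_cong_AE measurable_completion[OF hI] borel_measurable_times
          borel_measurable_indicator borel_measurable_integrable[OF h]) auto
    then show "(LINT x|lborel. h' x * indicator (box lo hi) x) = 0" for lo hi
      using box0 integral_completion[OF hI] by simp
  qed
  then have "AE x in lebesgue. h' x = 0"
    by (rule AE_completion)
  with ae' show ?thesis
    by eventually_elim simp
qed

lemma AE_eq_0_if_test_orthogonal:
  assumes g: "g \<in> borel_measurable lebesgue" and orth: "test_orthogonal g"
  shows "AE x in lebesgue. g x = 0"
proof -
  \<comment> \<open>g is only locally integrable, so the box criterion is applied to g on each ?B n.\<close>
  let ?B = "\<lambda>n::nat. box (- (real n *\<^sub>R One)) (real n *\<^sub>R One) :: R3 set"
  have "AE x in lebesgue. g x * indicator (?B n) x = 0" for n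
  proof (rule AE_lebesgue_eq_0_if_box_integrals_eq_0)
    show "integrable lebesgue (\<lambda>x. g x * indicator (?B n) x)"
      by (rule test_orthogonal_box(1)[OF g orth])
    show "(LINT x|lebesgue. g x * indicator (?B n) x * indicator (box lo hi) x) = 0" for lo hi
    proof -
      obtain lo' hi' where lohi: "?B n \<inter> box lo hi = box lo' hi'"
        using box_Int_box by blast
      have "(\<lambda>x. g x * indicator (?B n) x * indicator (box lo hi) x)
          = (\<lambda>x. g x * indicator (box lo' hi') x)"
        unfolding lohi[symmetric] by (simp add: fun_eq_iff indicator_inter_arith mult.assoc)
      then show ?thesis
        using test_orthogonal_box(2)[OF g orth] by simp
    qed
  qed
  then have "AE x in lebesgue. \<forall>n. g x * indicator (?B n) x = 0"
    unfolding AE_all_countable ..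
  then show ?thesis
    by eventually_elim (use UN_box_eq_UNIV in \<open>auto simp: indicator_def split: if_splits\<close>)
qed

lemma weak_grad_unique:
  assumes w1: "weak_grad w G1" and w2: "weak_grad w G2"
  shows "AE x in lebesgue. G1 x = G2 x"
proof -
  have "AE x in lebesgue. G1 x $ i - G2 x $ i = 0" for i
  proof (rule AE_eq_0_if_test_orthogonal)
    have "G1 \<in> borel_measurable lebesgue" "G2 \<in> borel_measurable lebesgue"
      using w1 w2 by (auto simp: weak_grad_def)
    then show "(\<lambda>x. G1 x $ i - G2 x $ i) \<in> borel_measurable lebesgue"
      using measurable_compose[OF _ borel_measurable_nth] by (intro borel_measurable_diff) blast+
    show "test_orthogonal (\<lambda>x. G1 x $ i - G2 x $ i)"
      unfolding test_orthogonal_def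
    proof (intro allI impI)
      fix \<phi> D assume "test_fun \<phi> D"
      with w1 w2 have "integrable lebesgue (\<lambda>x. G1 x $ i * \<phi> x)"
        "integrable lebesgue (\<lambda>x. G2 x $ i * \<phi> x)"
        "(LINT x|lebesgue. w x * D x (axis i 1)) = - (LINT x|lebesgue. G1 x $ i * \<phi> x)"
        "(LINT x|lebesgue. w x * D x (axis i 1)) = - (LINT x|lebesgue. G2 x $ i * \<phi> x)"
        unfolding weak_grad_def by blast+
      then show "integrable lebesgue (\<lambda>x. (G1 x $ i - G2 x $ i) * \<phi> x)
          \<and> (LINT x|lebesgue. (G1 x $ i - G2 x $ i) * \<phi> x) = 0"
        by (simp add: left_diff_distrib)
    qed
  qed
  then have "AE x in lebesgue. \<forall>i. G1 x $ i - G2 x $ i = 0"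
    unfolding AE_all_countable ..
  then show ?thesis
    by eventually_elim (simp add: vec_eq_iff)
qed

lemma grad_sq_eq:
  assumes G: "weak_grad w G" "integrable lebesgue (\<lambda>x. (norm (G x))\<^sup>2)"
  shows "grad_sq w = (LINT x|lebesgue. (norm (G x))\<^sup>2)"
proof -
  define G' where "G' = (SOME G. weak_grad w G \<and> integrable lebesgue (\<lambda>x. (norm (G x))\<^sup>2))"
  have "weak_grad w G' \<and> integrable lebesgue (\<lambda>x. (norm (G' x))\<^sup>2)"
    unfolding G'_def by (rule someI[of _ G]) (use G in blast)
  then have "weak_grad w G'" ..
  then have "AE x in lebesgue. G' x = G x"
    using G(1) by (rule weak_grad_unique)
  moreover have "G \<in> borel_measurable lebesgue" "G' \<in> borel_measurable lebesgue"
    using G(1) \<open>weak_grad w G'\<close> by (auto simp: weak_grad_def)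
  ultimately have "(LINT x|lebesgue. (norm (G' x))\<^sup>2) = (LINT x|lebesgue. (norm (G x))\<^sup>2)"
    by (intro integral_cong_AE) (auto elim!: eventually_mono)
  then show ?thesis
    unfolding grad_sq_def G'_def .
qed

section \<open>Scaling laws for the dilation\<close>

lemma integral_R3_scaleR:
  fixes f :: "R3 \<Rightarrow> real"
  assumes "t > 0"
  shows "(\<integral>x. f x \<partial>lebesgue) = t^3 * (\<integral>x. f (t *\<^sub>R x) \<partial>lebesgue)"
  using integral_scaleR[of t f] assms by simp

lemma dil_square: "(dil t u x)\<^sup>2 = t^4 * (u (t *\<^sub>R x))\<^sup>2"
  by (simp add: dil_def power_mult_distrib)

lemma Lp_pow_dil:
  assumes t: "t > 0" and p: "p > 0"
  shows "Lp_pow p (dil t u) = t powr (2*p - 3) * Lp_pow p u"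
proof -
  have "\<bar>dil t u x\<bar> powr p = t powr (2*p) * \<bar>u (t *\<^sub>R x)\<bar> powr p" for x
  proof -
    have "\<bar>dil t u x\<bar> = t\<^sup>2 * \<bar>u (t *\<^sub>R x)\<bar>"
      by (simp add: dil_def abs_mult)
    moreover have "(t\<^sup>2) powr p = t powr (2*p)"
      using t by (simp add: powr_powr[symmetric] powr_realpow)
    ultimately show ?thesis
      using t by (simp add: powr_mult)
  qed
  then have "Lp_pow p (dil t u) = t powr (2*p) * (LINT x|lebesgue. \<bar>u (t *\<^sub>R x)\<bar> powr p)"
    by (simp add: Lp_pow_def)
  moreover have "Lp_pow p u = t^3 * (LINT x|lebesgue. \<bar>u (t *\<^sub>R x)\<bar> powr p)"
    unfolding Lp_pow_def by (rule integral_R3_scaleR[OF t])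
  moreover have "t powr (2*p) = t powr (2*p - 3) * t^3"
    using t by (simp add: powr_diff powr_realpow)
  ultimately show ?thesis by simp
qed

lemma double_integral_dil:
  fixes k kt f g :: "R3 \<Rightarrow> real"
  assumes t: "t > 0" and kt: "\<And>z. kt (t *\<^sub>R z) = k z / t"
  shows "(LINT x|lebesgue. LINT y|lebesgue. k (x - y) * (t^4 * f (t *\<^sub>R x)) * (t^4 * g (t *\<^sub>R y)))
       = t^3 * (LINT x|lebesgue. LINT y|lebesgue. kt (x - y) * f x * g y)"
proof -
  have inner: "(LINT y|lebesgue. kt (t *\<^sub>R x - y) * f (t *\<^sub>R x) * g y)
      = t^2 * (LINT y|lebesgue. k (x - y) * f (t *\<^sub>R x) * g (t *\<^sub>R y))" for x
  proof -
    have "(LINT y|lebesgue. kt (t *\<^sub>R x - y) * f (t *\<^sub>R x) * g y)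
        = t^3 * (LINT y|lebesgue. kt (t *\<^sub>R (x - y)) * f (t *\<^sub>R x) * g (t *\<^sub>R y))"
      using integral_R3_scaleR[OF t, of "\<lambda>y. kt (t *\<^sub>R x - y) * f (t *\<^sub>R x) * g y"]
      by (simp add: scaleR_diff_right)
    also have "\<dots> = t^3 * (LINT y|lebesgue. (1/t) * (k (x - y) * f (t *\<^sub>R x) * g (t *\<^sub>R y)))"
      by (simp add: kt)
    also have "\<dots> = t^2 * (LINT y|lebesgue. k (x - y) * f (t *\<^sub>R x) * g (t *\<^sub>R y))"
      using t by (simp add: power3_eq_cube power2_eq_square)
    finally show ?thesis .
  qed
  have "t^3 * (LINT x|lebesgue. LINT y|lebesgue. kt (x - y) * f x * g y)
      = t^3 * (t^3 * (LINT x|lebesgue. t^2 * (LINT y|lebesgue. k (x - y) * f (t *\<^sub>R x) * g (t *\<^sub>R y))))"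
    using integral_R3_scaleR[OF t, of "\<lambda>x. LINT y|lebesgue. kt (x - y) * f x * g y"]
    by (simp add: inner)
  also have "\<dots> = t^8 * (LINT x|lebesgue. LINT y|lebesgue. k (x - y) * f (t *\<^sub>R x) * g (t *\<^sub>R y))"
    by (simp add: power_add[symmetric] mult.assoc[symmetric])
  also have "\<dots> = (LINT x|lebesgue. LINT y|lebesgue. t^8 * (k (x - y) * f (t *\<^sub>R x) * g (t *\<^sub>R y)))"
    by simp
  also have "\<dots> = (LINT x|lebesgue. LINT y|lebesgue. k (x - y) * (t^4 * f (t *\<^sub>R x)) * (t^4 * g (t *\<^sub>R y)))"
    by (simp add: power_add[symmetric] algebra_simps)
  finally show ?thesis by simp
qed

lemma Kker_mult_scaleR:
  assumes "a > 0" "t > 0"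
  shows "Kker (a * t) (t *\<^sub>R z) = Kker a z / t"
  using assms by (simp add: Kker_def field_simps)

lemma V_dil:
  assumes "a > 0" "t > 0"
  shows "V a (\<lambda>x. (dil t u x)\<^sup>2) (\<lambda>x. (dil t u x)\<^sup>2) = t^3 * V (a * t) (\<lambda>x. (u x)\<^sup>2) (\<lambda>x. (u x)\<^sup>2)"
  unfolding V_def dil_square
  using double_integral_dil[OF assms(2), of "Kker (a * t)" "Kker a"] Kker_mult_scaleR[OF assms] by simp

lemma test_fun_scaleR:
  assumes c: "c \<noteq> 0" and \<phi>: "test_fun \<phi> D"
  shows "test_fun (\<lambda>y. \<phi> (c *\<^sub>R y)) (\<lambda>y v. D (c *\<^sub>R y) (c *\<^sub>R v))"
  unfolding test_fun_def
proof (intro conjI allI)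
  fix y :: R3
  have "((\<lambda>y. c *\<^sub>R y) has_derivative (\<lambda>v. c *\<^sub>R v)) (at y)"
    by (intro derivative_intros)
  moreover have "(\<phi> has_derivative D (c *\<^sub>R y)) (at (c *\<^sub>R y))"
    using \<phi> by (simp add: test_fun_def)
  ultimately show "((\<lambda>y. \<phi> (c *\<^sub>R y)) has_derivative (\<lambda>v. D (c *\<^sub>R y) (c *\<^sub>R v))) (at y)"
    using diff_chain_at by (fastforce simp: o_def)
next
  fix v
  have "continuous_on UNIV (\<lambda>x. D x (c *\<^sub>R v))"
    using \<phi> by (simp add: test_fun_def)
  then show "continuous_on UNIV (\<lambda>y. D (c *\<^sub>R y) (c *\<^sub>R v))"
    by (rule continuous_on_compose2[of UNIV]) (auto intro: continuous_intros)
next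
  have "{y. \<phi> (c *\<^sub>R y) \<noteq> 0} \<subseteq> (\<lambda>x. inverse c *\<^sub>R x) ` closure {x. \<phi> x \<noteq> 0}"
    using c closure_subset by (force intro: image_eqI[of _ _ "c *\<^sub>R _"])
  moreover have "compact ((\<lambda>x. inverse c *\<^sub>R x) ` closure {x. \<phi> x \<noteq> 0})"
    using \<phi> by (intro compact_scaling) (simp add: test_fun_def)
  ultimately have "bounded {y. \<phi> (c *\<^sub>R y) \<noteq> 0}"
    using compact_imp_bounded bounded_subset by blast
  then show "compact (closure {y. \<phi> (c *\<^sub>R y) \<noteq> 0})"
    by (rule compact_closure[THEN iffD2])
qed

lemma weak_grad_dil:
  assumes t: "t > 0" and G: "weak_grad u G"
  shows "weak_grad (dil t u) (\<lambda>x. t^3 *\<^sub>R G (t *\<^sub>R x))"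
  unfolding weak_grad_def
proof (intro conjI allI impI)
  have "G \<in> borel_measurable lebesgue"
    using G by (simp add: weak_grad_def)
  then show "(\<lambda>x. t^3 *\<^sub>R G (t *\<^sub>R x)) \<in> borel_measurable lebesgue"
    by measurable
  fix \<phi> D i assume \<phi>: "test_fun \<phi> D"
  define \<phi>' where "\<phi>' y = \<phi> (inverse t *\<^sub>R y)" for y
  define D' where "D' y v = D (inverse t *\<^sub>R y) (inverse t *\<^sub>R v)" for y v
  have "test_fun \<phi>' D'"
    unfolding \<phi>'_def[abs_def] D'_def[abs_def] using t \<phi> by (intro test_fun_scaleR) auto
  with G have int: "integrable lebesgue (\<lambda>x. u x * D' x (axis i 1))"
      "integrable lebesgue (\<lambda>x. G x $ i * \<phi>' x)"
    and parts: "(LINT x|lebesgue. u x * D' x (axis i 1)) = - (LINT x|lebesgue. G x $ i * \<phi>' x)"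
    unfolding weak_grad_def by blast+
  have "linear (D x)" for x
    using \<phi> unfolding test_fun_def by (meson has_derivative_linear)
  then have eq1: "dil t u x * D x (axis i 1) = t^3 * (u (t *\<^sub>R x) * D' (t *\<^sub>R x) (axis i 1))" for x
    using t by (simp add: dil_def D'_def linear_scale power3_eq_cube power2_eq_square)
  have eq2: "(t^3 *\<^sub>R G (t *\<^sub>R x)) $ i * \<phi> x = t^3 * (G (t *\<^sub>R x) $ i * \<phi>' (t *\<^sub>R x))" for x
    using t by (simp add: \<phi>'_def)
  show "integrable lebesgue (\<lambda>x. dil t u x * D x (axis i 1))"
    unfolding eq1 using int(1) integrable_scaleR_iff[of t "\<lambda>x. u x * D' x (axis i 1)"] t by simp
  show "integrable lebesgue (\<lambda>x. (t^3 *\<^sub>R G (t *\<^sub>R x)) $ i * \<phi> x)"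
    unfolding eq2 using int(2) integrable_scaleR_iff[of t "\<lambda>x. G x $ i * \<phi>' x"] t by simp
  show "(LINT x|lebesgue. dil t u x * D x (axis i 1))
      = - (LINT x|lebesgue. (t^3 *\<^sub>R G (t *\<^sub>R x)) $ i * \<phi> x)"
    using parts integral_R3_scaleR[OF t, of "\<lambda>x. u x * D' x (axis i 1)"]
      integral_R3_scaleR[OF t, of "\<lambda>x. G x $ i * \<phi>' x"]
    unfolding eq1 eq2 by simp
qed

lemma integral_norm_sq_dil:
  fixes G :: "R3 \<Rightarrow> R3"
  assumes t: "t > 0"
  shows "integrable lebesgue (\<lambda>x. (norm (t^3 *\<^sub>R G (t *\<^sub>R x)))\<^sup>2)
      \<longleftrightarrow> integrable lebesgue (\<lambda>x. (norm (G x))\<^sup>2)"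
    and "(LINT x|lebesgue. (norm (t^3 *\<^sub>R G (t *\<^sub>R x)))\<^sup>2) = t^3 * (LINT x|lebesgue. (norm (G x))\<^sup>2)"
proof -
  have eq: "(norm (t^3 *\<^sub>R G (t *\<^sub>R x)))\<^sup>2 = t^6 * (norm (G (t *\<^sub>R x)))\<^sup>2" for x
    using t by (simp add: power_mult_distrib power_mult[symmetric])
  show "integrable lebesgue (\<lambda>x. (norm (t^3 *\<^sub>R G (t *\<^sub>R x)))\<^sup>2)
      \<longleftrightarrow> integrable lebesgue (\<lambda>x. (norm (G x))\<^sup>2)"
    unfolding eq using integrable_scaleR_iff[of t "\<lambda>x. (norm (G x))\<^sup>2"] t by simp
  show "(LINT x|lebesgue. (norm (t^3 *\<^sub>R G (t *\<^sub>R x)))\<^sup>2) = t^3 * (LINT x|lebesgue. (norm (G x))\<^sup>2)"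
    unfolding eq integral_R3_scaleR[OF t, of "\<lambda>x. (norm (G x))\<^sup>2"]
    by (simp add: power_add[symmetric] mult.assoc[symmetric])
qed

lemma grad_sq_nonneg: "0 \<le> grad_sq u"
  unfolding grad_sq_def by (rule Bochner_Integration.integral_nonneg) simp

lemma grad_sq_dil:
  assumes t: "t > 0" and u: "u \<in> D12"
  shows "grad_sq (dil t u) = t^3 * grad_sq u"
proof -
  obtain G where G: "weak_grad u G" "integrable lebesgue (\<lambda>x. (norm (G x))\<^sup>2)"
    using u by (auto simp: D12_def)
  have "grad_sq (dil t u) = (LINT x|lebesgue. (norm (t^3 *\<^sub>R G (t *\<^sub>R x)))\<^sup>2)"
    using weak_grad_dil[OF t G(1)] integral_norm_sq_dil(1)[OF t] G(2) by (intro grad_sq_eq) auto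
  also have "\<dots> = t^3 * grad_sq u"
    using integral_norm_sq_dil(2)[OF t] grad_sq_eq[OF G] by simp
  finally show ?thesis .
qed

lemma I_a_dil:
  assumes "a > 0" "t > 0" "p > 0" "u \<in> D12"
  shows "I_a a q p (dil t u) = t^3 / 2 * grad_sq u
      + q\<^sup>2 / 4 * t^3 * V (a * t) (\<lambda>x. (u x)\<^sup>2) (\<lambda>x. (u x)\<^sup>2) - t powr (2*p - 3) / p * Lp_pow p u"
  unfolding I_a_def using grad_sq_dil[OF assms(2,4)] V_dil[OF assms(1,2)] Lp_pow_dil[OF assms(2,3)]
  by simp

section \<open>Double integrals against dominated kernels\<close>

lemma convolution_borel_measurable:
  fixes k \<rho> :: "'a::euclidean_space \<Rightarrow> real"
  assumes k: "k \<in> borel_measurable borel" and \<rho>: "\<rho> \<in> borel_measurable lebesgue"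
  shows "(\<lambda>x. \<integral>\<^sup>+y. ennreal (k (x - y) * \<rho> y) \<partial>lebesgue) \<in> borel_measurable lebesgue"
    and "(\<lambda>x. LINT y|lebesgue. k (x - y) * \<rho> y) \<in> borel_measurable lebesgue"
proof -
  obtain \<rho>' where \<rho>': "\<rho>' \<in> borel_measurable lborel" and ae: "AE y in lborel. \<rho> y = \<rho>' y"
    using completion_ex_borel_measurable_real[OF \<rho>] by blast
  have ae': "AE y in lebesgue. \<rho> y = \<rho>' y"
    by (rule AE_completion[OF ae])
  have "(\<lambda>p::'a \<times> 'a. fst p - snd p) \<in> borel_measurable (lborel \<Otimes>\<^sub>M lborel)"
    by measurable
  then have "(\<lambda>p. k (fst p - snd p)) \<in> borel_measurable (lborel \<Otimes>\<^sub>M lborel)"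
    using measurable_compose k by blast
  moreover have "(\<lambda>p. \<rho>' (snd p)) \<in> borel_measurable (lborel \<Otimes>\<^sub>M lborel)"
    using measurable_compose[OF measurable_snd] \<rho>' by simp
  ultimately have "(\<lambda>p. k (fst p - snd p) * \<rho>' (snd p)) \<in> borel_measurable (lborel \<Otimes>\<^sub>M lborel)"
    by (rule borel_measurable_times)
  then have pair: "(\<lambda>(x, y). k (x - y) * \<rho>' y) \<in> borel_measurable (lborel \<Otimes>\<^sub>M lborel)"
    by (simp add: case_prod_beta')
  have kx: "(\<lambda>y. k (x - y)) \<in> borel_measurable lborel" for x
    by (intro measurable_compose[OF _ k]) measurable
  have kx': "(\<lambda>y. k (x - y)) \<in> borel_measurable lebesgue" for x
    using kx by (rule measurable_completion)
  have "(\<integral>\<^sup>+y. ennreal (k (x - y) * \<rho> y) \<partial>lebesgue) = (\<integral>\<^sup>+y. ennreal (k (x - y) * \<rho>' y) \<partial>lborel)" for x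
  proof -
    have "(\<integral>\<^sup>+y. ennreal (k (x - y) * \<rho> y) \<partial>lebesgue) = (\<integral>\<^sup>+y. ennreal (k (x - y) * \<rho>' y) \<partial>lebesgue)"
      using ae' by (intro nn_integral_cong_AE) (auto elim!: eventually_mono)
    also have "\<dots> = (\<integral>\<^sup>+y. ennreal (k (x - y) * \<rho>' y) \<partial>lborel)"
      by (rule nn_integral_completion)
    finally show ?thesis .
  qed
  moreover have "(\<lambda>x. \<integral>\<^sup>+y. ennreal (k (x - y) * \<rho>' y) \<partial>lborel) \<in> borel_measurable lborel"
  proof (rule lborel.borel_measurable_nn_integral)
    show "(\<lambda>(x, y). ennreal (k (x - y) * \<rho>' y)) \<in> borel_measurable (lborel \<Otimes>\<^sub>M lborel)"
      using measurable_compose[OF pair measurable_ennreal] by (simp add: case_prod_beta')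
  qed
  ultimately show "(\<lambda>x. \<integral>\<^sup>+y. ennreal (k (x - y) * \<rho> y) \<partial>lebesgue) \<in> borel_measurable lebesgue"
    by (simp add: measurable_completion)
  have "(LINT y|lebesgue. k (x - y) * \<rho> y) = (LINT y|lborel. k (x - y) * \<rho>' y)" for x
  proof -
    have "(LINT y|lebesgue. k (x - y) * \<rho> y) = (LINT y|lebesgue. k (x - y) * \<rho>' y)"
      using ae' kx' \<rho> measurable_completion[OF \<rho>']
      by (intro integral_cong_AE) (auto elim!: eventually_mono)
    also have "\<dots> = (LINT y|lborel. k (x - y) * \<rho>' y)"
      using kx \<rho>' by (intro integral_completion borel_measurable_times) simp_all
    finally show ?thesis .
  qed
  moreover have "(\<lambda>x. LINT y|lborel. k (x - y) * \<rho>' y) \<in> borel_measurable lborel"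
    using pair by (rule lborel.borel_measurable_lebesgue_integral)
  ultimately show "(\<lambda>x. LINT y|lebesgue. k (x - y) * \<rho> y) \<in> borel_measurable lebesgue"
    by (simp add: measurable_completion)
qed

context
  fixes K \<rho> :: "'a::euclidean_space \<Rightarrow> real"
  assumes K: "K \<in> borel_measurable borel" "\<And>z. 0 \<le> K z"
    and \<rho>: "\<rho> \<in> borel_measurable lebesgue" "\<And>x. 0 \<le> \<rho> x"
    and energy_finite: "(\<integral>\<^sup>+x. \<integral>\<^sup>+y. ennreal (K (x - y) * \<rho> x * \<rho> y) \<partial>lebesgue \<partial>lebesgue) < \<infinity>"
begin

lemma kernel_energy_borel_measurable:
  "(\<lambda>x. \<integral>\<^sup>+y. ennreal (K (x - y) * \<rho> x * \<rho> y) \<partial>lebesgue) \<in> borel_measurable lebesgue"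
proof -
  have "(\<integral>\<^sup>+y. ennreal (K (x - y) * \<rho> x * \<rho> y) \<partial>lebesgue)
      = ennreal (\<rho> x) * (\<integral>\<^sup>+y. ennreal (K (x - y) * \<rho> y) \<partial>lebesgue)" for x
  proof -
    have "(\<lambda>y. K (x - y)) \<in> borel_measurable lebesgue"
      by (intro measurable_completion measurable_compose[OF _ K(1)]) measurable
    then have "(\<integral>\<^sup>+y. ennreal (\<rho> x) * ennreal (K (x - y) * \<rho> y) \<partial>lebesgue)
        = ennreal (\<rho> x) * (\<integral>\<^sup>+y. ennreal (K (x - y) * \<rho> y) \<partial>lebesgue)"
      using \<rho>(1) by (intro nn_integral_cmult) measurable
    then show ?thesis
      using \<rho>(2) K(2) by (simp add: ennreal_mult'[symmetric] mult_ac)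
  qed
  then show ?thesis
    using convolution_borel_measurable(1)[OF K(1) \<rho>(1)] \<rho>(1) by simp
qed

lemma kernel_energy_finite_AE:
  "AE x in lebesgue. (\<integral>\<^sup>+y. ennreal (K (x - y) * \<rho> x * \<rho> y) \<partial>lebesgue) \<noteq> \<infinity>"
  using energy_finite by (intro nn_integral_PInf_AE kernel_energy_borel_measurable) simp

lemma nn_integral_dominated_kernel_le:
  fixes k :: "'a \<Rightarrow> real"
  assumes k: "0 \<le> C" "\<And>z. \<bar>k z\<bar> \<le> C * K z"
  shows "(\<integral>\<^sup>+y. ennreal (norm (k (x - y) * \<rho> x * \<rho> y)) \<partial>lebesgue)
    \<le> ennreal C * (\<integral>\<^sup>+y. ennreal (K (x - y) * \<rho> x * \<rho> y) \<partial>lebesgue)"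
proof -
  have "(\<integral>\<^sup>+y. ennreal (norm (k (x - y) * \<rho> x * \<rho> y)) \<partial>lebesgue)
      \<le> (\<integral>\<^sup>+y. ennreal C * ennreal (K (x - y) * \<rho> x * \<rho> y) \<partial>lebesgue)"
  proof (intro nn_integral_mono)
    fix y
    have "norm (k (x - y) * \<rho> x * \<rho> y) = \<bar>k (x - y)\<bar> * (\<rho> x * \<rho> y)"
      using \<rho>(2)[of x] \<rho>(2)[of y] by (simp add: abs_mult)
    also have "\<dots> \<le> C * K (x - y) * (\<rho> x * \<rho> y)"
      using k(2)[of "x - y"] \<rho>(2)[of x] \<rho>(2)[of y] by (intro mult_right_mono) auto
    finally have "norm (k (x - y) * \<rho> x * \<rho> y) \<le> C * (K (x - y) * \<rho> x * \<rho> y)"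
      by (simp add: mult_ac)
    then show "ennreal (norm (k (x - y) * \<rho> x * \<rho> y)) \<le> ennreal C * ennreal (K (x - y) * \<rho> x * \<rho> y)"
      using k(1) by (simp add: ennreal_mult'[symmetric] ennreal_leI)
  qed
  also have "\<dots> = ennreal C * (\<integral>\<^sup>+y. ennreal (K (x - y) * \<rho> x * \<rho> y) \<partial>lebesgue)"
    by (intro nn_integral_cmult measurable_compose[OF _ measurable_ennreal] borel_measurable_times
        measurable_const \<rho>(1) measurable_completion measurable_compose[OF _ K(1)]) auto
  finally show ?thesis .
qed

lemma kernel_double_integrable:
  fixes k :: "'a \<Rightarrow> real"
  assumes k: "k \<in> borel_measurable borel" "0 \<le> C" "\<And>z. \<bar>k z\<bar> \<le> C * K z"
  shows "AE x in lebesgue. integrable lebesgue (\<lambda>y. k (x - y) * \<rho> x * \<rho> y)"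
    and "integrable lebesgue (\<lambda>x. LINT y|lebesgue. k (x - y) * \<rho> x * \<rho> y)"
proof -
  let ?H = "\<lambda>x. \<integral>\<^sup>+y. ennreal (K (x - y) * \<rho> x * \<rho> y) \<partial>lebesgue"
  note bound = nn_integral_dominated_kernel_le[OF k(2,3)]
  have kx: "(\<lambda>y. k (x - y)) \<in> borel_measurable lebesgue" for x
    by (intro measurable_completion measurable_compose[OF _ k(1)]) measurable
  show "AE x in lebesgue. integrable lebesgue (\<lambda>y. k (x - y) * \<rho> x * \<rho> y)"
    using kernel_energy_finite_AE
  proof eventually_elim
    case (elim x)
    show ?case
    proof (rule integrableI_bounded)
      show "(\<lambda>y. k (x - y) * \<rho> x * \<rho> y) \<in> borel_measurable lebesgue"
        using kx \<rho>(1) by measurable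
      show "(\<integral>\<^sup>+y. ennreal (norm (k (x - y) * \<rho> x * \<rho> y)) \<partial>lebesgue) < \<infinity>"
        using bound[of x] elim by (simp add: ennreal_mult_less_top less_top le_less_trans)
    qed
  qed
  define F where "F x = (LINT y|lebesgue. k (x - y) * \<rho> x * \<rho> y)" for x
  have F_eq: "F x = \<rho> x * (LINT y|lebesgue. k (x - y) * \<rho> y)" for x
    unfolding F_def integral_mult_right_zero[symmetric] by (simp add: mult_ac)
  have F: "F \<in> borel_measurable lebesgue"
    unfolding F_eq[abs_def] using convolution_borel_measurable(2)[OF k(1) \<rho>(1)] \<rho>(1) by measurable
  have "(\<integral>\<^sup>+x. ennreal (norm (F x)) \<partial>lebesgue) \<le> (\<integral>\<^sup>+x. ennreal C * ?H x \<partial>lebesgue)"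
  proof (intro nn_integral_mono)
    fix x
    show "ennreal (norm (F x)) \<le> ennreal C * ?H x"
    proof (cases "integrable lebesgue (\<lambda>y. k (x - y) * \<rho> x * \<rho> y)")
      case True
      then show ?thesis
        unfolding F_def using integral_norm_bound_ennreal bound order_trans by blast
    qed (simp add: F_def not_integrable_integral_eq)
  qed
  also have "\<dots> = ennreal C * (\<integral>\<^sup>+x. ?H x \<partial>lebesgue)"
    using kernel_energy_borel_measurable by (rule nn_integral_cmult)
  also have "\<dots> < \<infinity>"
    using energy_finite by (simp add: ennreal_mult_less_top less_top)
  finally show "integrable lebesgue (\<lambda>x. LINT y|lebesgue. k (x - y) * \<rho> x * \<rho> y)"
    using F unfolding F_def[abs_def] by (intro integrableI_bounded)
qed

lemma kernel_double_integral_diff: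
  fixes k l :: "'a \<Rightarrow> real"
  assumes k: "k \<in> borel_measurable borel" "0 \<le> Ck" "\<And>z. \<bar>k z\<bar> \<le> Ck * K z"
    and l: "l \<in> borel_measurable borel" "0 \<le> Cl" "\<And>z. \<bar>l z\<bar> \<le> Cl * K z"
  shows "(LINT x|lebesgue. LINT y|lebesgue. (k (x - y) - l (x - y)) * \<rho> x * \<rho> y)
    = (LINT x|lebesgue. LINT y|lebesgue. k (x - y) * \<rho> x * \<rho> y)
      - (LINT x|lebesgue. LINT y|lebesgue. l (x - y) * \<rho> x * \<rho> y)"
proof -
  note int_k = kernel_double_integrable[OF k] and int_l = kernel_double_integrable[OF l]
  have "(LINT x|lebesgue. LINT y|lebesgue. (k (x - y) - l (x - y)) * \<rho> x * \<rho> y)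
    = (LINT x|lebesgue. (LINT y|lebesgue. k (x - y) * \<rho> x * \<rho> y)
        - (LINT y|lebesgue. l (x - y) * \<rho> x * \<rho> y))"
  proof (rule integral_cong_AE)
    have "(\<lambda>z. k z - l z) \<in> borel_measurable borel"
      using k(1) l(1) by measurable
    moreover have "\<bar>k z - l z\<bar> \<le> (Ck + Cl) * K z" for z
      using k(3)[of z] l(3)[of z] abs_triangle_ineq4[of "k z" "l z"] by (simp add: distrib_right)
    ultimately have "integrable lebesgue (\<lambda>x. LINT y|lebesgue. (k (x - y) - l (x - y)) * \<rho> x * \<rho> y)"
      using k(2) l(2) by (intro kernel_double_integrable(2)[where k="\<lambda>z. k z - l z" and C="Ck + Cl"]) auto
    then
    show "(\<lambda>x. LINT y|lebesgue. (k (x - y) - l (x - y)) * \<rho> x * \<rho> y) \<in> borel_measurable lebesgue"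
      by (simp add: borel_measurable_integrable)
    show "(\<lambda>x. (LINT y|lebesgue. k (x - y) * \<rho> x * \<rho> y) - (LINT y|lebesgue. l (x - y) * \<rho> x * \<rho> y))
        \<in> borel_measurable lebesgue"
      using int_k(2) int_l(2) by (intro borel_measurable_diff borel_measurable_integrable)
    show "AE x in lebesgue. (LINT y|lebesgue. (k (x - y) - l (x - y)) * \<rho> x * \<rho> y)
        = (LINT y|lebesgue. k (x - y) * \<rho> x * \<rho> y) - (LINT y|lebesgue. l (x - y) * \<rho> x * \<rho> y)"
      using int_k(1) int_l(1) by eventually_elim (simp add: left_diff_distrib)
  qed
  also have "\<dots> = (LINT x|lebesgue. LINT y|lebesgue. k (x - y) * \<rho> x * \<rho> y)
      - (LINT x|lebesgue. LINT y|lebesgue. l (x - y) * \<rho> x * \<rho> y)"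
    using int_k(2) int_l(2) by (rule Bochner_Integration.integral_diff)
  finally show ?thesis .
qed

end

section \<open>The kernel inequality\<close>

lemma nonneg_if_deriv_sign_change_at_1:
  fixes f f' :: "real \<Rightarrow> real"
  assumes deriv: "\<And>t. t > 0 \<Longrightarrow> (f has_real_derivative f' t) (at t)"
    and decr: "\<And>t. 0 < t \<Longrightarrow> t < 1 \<Longrightarrow> f' t \<le> 0"
    and incr: "\<And>t. 1 < t \<Longrightarrow> 0 \<le> f' t"
    and "f 1 = 0" and "t > 0"
  shows "0 \<le> f t"
proof (cases t "1::real" rule: linorder_cases)
  case less
  obtain z where z: "t < z" "z < 1" "f 1 - f t = (1 - t) * f' z"
    using MVT2[OF less, of f f'] deriv \<open>t > 0\<close> by force
  moreover have "(1 - t) * f' z \<le> 0"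
    using decr[of z] less \<open>t > 0\<close> z by (intro mult_nonneg_nonpos) auto
  ultimately show ?thesis
    using \<open>f 1 = 0\<close> by linarith
next
  case greater
  obtain z where "1 < z" "z < t" "f t - f 1 = (t - 1) * f' z"
    using MVT2[OF greater, of f f'] deriv by force
  with incr[of z] greater \<open>f 1 = 0\<close> show ?thesis
    by simp
qed (use \<open>f 1 = 0\<close> in simp)

lemma
  fixes t m :: real
  assumes "t > 0" "m \<ge> 3"
  shows powr_le_square_below_1: "t < 1 \<Longrightarrow> t powr (m - 1) \<le> t\<^sup>2"
    and square_le_powr_above_1: "1 < t \<Longrightarrow> t\<^sup>2 \<le> t powr (m - 1)"
  using assms powr_mono'[of 2 "m - 1" t] powr_mono[of 2 "m - 1" t]
  by (simp_all add: powr_numeral)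

lemma dilation_gradient_factor_nonneg:
  fixes t m :: real
  assumes t: "t > 0" and m: "m \<ge> 3"
  shows "0 \<le> (1 - t^3) / 2 - 3 * (1 - t powr m) / (2 * m)"
proof (rule nonneg_if_deriv_sign_change_at_1[where f="\<lambda>t. (1 - t^3) / 2 - 3 * (1 - t powr m) / (2 * m)"
      and f'="\<lambda>t. 3 / 2 * (t powr (m - 1) - t\<^sup>2)"])
  fix t :: real assume "t > 0"
  then show "((\<lambda>t. (1 - t^3) / 2 - 3 * (1 - t powr m) / (2 * m)) has_real_derivative
      3 / 2 * (t powr (m - 1) - t\<^sup>2)) (at t)"
    using m by (auto intro!: derivative_eq_intros simp: power2_eq_square field_simps)
qed (use t m powr_le_square_below_1 square_le_powr_above_1 in auto)

definition L_profile :: "real \<Rightarrow> real" where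
  "L_profile s = 1 - exp (- s) - s / 3 * exp (- s)"

lemma L_profile_mono:
  assumes "0 \<le> s1" "s1 \<le> s2"
  shows "L_profile s1 \<le> L_profile s2"
proof (rule DERIV_nonneg_imp_increasing_open[OF assms(2)])
  fix x assume x: "s1 < x" "x < s2"
  have "(L_profile has_real_derivative exp (- x) * (2/3 + x/3)) (at x)"
    unfolding L_profile_def[abs_def] by (auto intro!: derivative_eq_intros simp: field_simps)
  moreover have "0 \<le> exp (- x) * (2/3 + x/3)"
    using x assms by simp
  ultimately show "\<exists>y. (L_profile has_real_derivative y) (at x) \<and> 0 \<le> y"
    by blast
qed (auto simp: L_profile_def intro!: continuous_intros)

lemma L_profile_nonneg: "0 \<le> s \<Longrightarrow> 0 \<le> L_profile s"
  using L_profile_mono[of 0 s] by (simp add: L_profile_def)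

lemma kernel_profile_gap_nonneg:
  fixes y t m :: real
  assumes y: "y > 0" and t: "t > 0" and m: "m \<ge> 3"
  shows "0 \<le> (1 - exp (- y)) - t^3 * (1 - exp (- (y / t))) - 3 * (1 - t powr m) / m * L_profile y"
proof (rule nonneg_if_deriv_sign_change_at_1
    [where f="\<lambda>t. (1 - exp (- y)) - t^3 * (1 - exp (- (y / t))) - 3 * (1 - t powr m) / m * L_profile y"
      and f'="\<lambda>t. 3 * (t powr (m - 1) * L_profile y - t\<^sup>2 * L_profile (y / t))"])
  fix t :: real assume t: "t > 0"
  have "((\<lambda>t. (1 - exp (- y)) - t^3 * (1 - exp (- (y / t))) - 3 * (1 - t powr m) / m * L_profile y)
      has_real_derivative - (3 * t\<^sup>2 * (1 - exp (- (y / t))) - t^3 * (exp (- (y / t)) * (y / t\<^sup>2)))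
        + 3 * (m * t powr (m - 1)) / m * L_profile y) (at t)"
    using t m by (auto intro!: derivative_eq_intros simp: power2_eq_square field_simps)
  moreover have "- (3 * t\<^sup>2 * (1 - exp (- (y / t))) - t^3 * (exp (- (y / t)) * (y / t\<^sup>2)))
        + 3 * (m * t powr (m - 1)) / m * L_profile y
      = 3 * (t powr (m - 1) * L_profile y - t\<^sup>2 * L_profile (y / t))"
    using t m by (simp add: L_profile_def power2_eq_square power3_eq_cube field_simps)
  ultimately show "((\<lambda>t. (1 - exp (- y)) - t^3 * (1 - exp (- (y / t))) - 3 * (1 - t powr m) / m * L_profile y)
      has_real_derivative 3 * (t powr (m - 1) * L_profile y - t\<^sup>2 * L_profile (y / t))) (at t)"
    by simp
next
  fix t :: real assume "0 < t" "t < 1"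
  then have "t powr (m - 1) * L_profile y \<le> t\<^sup>2 * L_profile y"
    using powr_le_square_below_1[of t m] m y L_profile_nonneg[of y] by (intro mult_right_mono) auto
  also have "\<dots> \<le> t\<^sup>2 * L_profile (y / t)"
    using \<open>0 < t\<close> \<open>t < 1\<close> y by (intro mult_left_mono L_profile_mono) (auto simp: field_simps)
  finally show "3 * (t powr (m - 1) * L_profile y - t\<^sup>2 * L_profile (y / t)) \<le> 0"
    by simp
next
  fix t :: real assume "1 < t"
  then have "t\<^sup>2 * L_profile (y / t) \<le> t\<^sup>2 * L_profile y"
    using y by (intro mult_left_mono L_profile_mono) (auto simp: field_simps)
  also have "\<dots> \<le> t powr (m - 1) * L_profile y"
    using square_le_powr_above_1[of t m] \<open>1 < t\<close> m y L_profile_nonneg[of y]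
    by (intro mult_right_mono) auto
  finally show "0 \<le> 3 * (t powr (m - 1) * L_profile y - t\<^sup>2 * L_profile (y / t))"
    by simp
qed (use t in simp_all)

lemma Kker_Lker_at:
  assumes a: "a > 0" and t: "t > 0" and z: "z \<noteq> 0"
  shows "Kker a z = (1 - exp (- (norm z / a))) / norm z"
    and "Kker (a * t) z = (1 - exp (- (norm z / a / t))) / norm z"
    and "Lker a z = L_profile (norm z / a) / norm z"
  using a t unfolding Kker_def Lker_def L_profile_def by (simp_all add: field_simps)

lemma Kker_nonneg:
  assumes "a > 0"
  shows "0 \<le> Kker a z"
  using assms by (simp add: Kker_def divide_nonneg_nonneg)

lemma Lker_nonneg:
  assumes "a > 0"
  shows "0 \<le> Lker a z"
  using Kker_Lker_at(3)[OF assms zero_less_one, of z] assms L_profile_nonneg[of "norm z / a"]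
  by (cases "z = 0") (simp_all add: Lker_def)

lemma Lker_le_Kker:
  assumes "a > 0"
  shows "Lker a z \<le> Kker a z"
  using assms unfolding Lker_def Kker_def by (simp add: divide_right_mono diff_divide_distrib)

lemma Kker_scaled_le:
  assumes a: "a > 0" and t: "t > 0"
  shows "Kker (a * t) z \<le> real (nat \<lceil>1/t\<rceil>) * Kker a z"
proof (cases "z = 0")
  case False
  define N where "N = nat \<lceil>1/t\<rceil>"
  define y where "y = norm z / a"
  have y: "y > 0"
    using False a by (simp add: y_def)
  have "1 / t \<le> real N"
    unfolding N_def by linarith
  then have "y / t \<le> real N * y"
    using mult_right_mono[of "1 / t" "real N" y] y by simp
  then have "exp (- y) ^ N \<le> exp (- (y / t))"
    by (simp add: exp_of_nat_mult[symmetric])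
  then have "1 - exp (- (y / t)) \<le> 1 - exp (- y) ^ N"
    by simp
  also have "\<dots> \<le> real N * (1 - exp (- y))"
    using Bernoulli_inequality[of "exp (- y) - 1" N] by (simp add: algebra_simps)
  finally have "(1 - exp (- (y / t))) / norm z \<le> real N * (1 - exp (- y)) / norm z"
    by (simp add: divide_right_mono)
  then show ?thesis
    using Kker_Lker_at(1,2)[OF a t False] by (simp add: N_def y_def)
qed (simp add: Kker_def)

lemma Kker_scaled_plus_Lker_le:
  assumes a: "a > 0" and t: "t > 0" and m: "m \<ge> 3"
  shows "t^3 * Kker (a * t) z + 3 * (1 - t powr m) / m * Lker a z \<le> Kker a z"
proof (cases "z = 0")
  case False
  have "0 \<le> ((1 - exp (- (norm z / a))) - t^3 * (1 - exp (- (norm z / a / t)))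
      - 3 * (1 - t powr m) / m * L_profile (norm z / a)) / norm z"
    using kernel_profile_gap_nonneg[of "norm z / a" t m] False a t m by simp
  also have "\<dots> = Kker a z - t^3 * Kker (a * t) z - 3 * (1 - t powr m) / m * Lker a z"
    using Kker_Lker_at[OF a t False] by (simp add: diff_divide_distrib right_diff_distrib)
  finally show ?thesis
    by simp
qed (simp add: Kker_def Lker_def)

lemma Kker_borel_measurable [measurable]: "Kker a \<in> borel_measurable borel"
  unfolding Kker_def[abs_def] by measurable

lemma Lker_borel_measurable [measurable]: "Lker a \<in> borel_measurable borel"
  unfolding Lker_def[abs_def] by measurable

lemma V_scaled_plus_W_le:
  fixes \<rho> :: "R3 \<Rightarrow> real"
  assumes a: "a > 0" and t: "t > 0" and m: "m \<ge> 3"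
    and \<rho>: "\<rho> \<in> borel_measurable lebesgue" "\<And>x. 0 \<le> \<rho> x" and fin: "Vnn a \<rho> \<rho> < \<infinity>"
  shows "t^3 * V (a * t) \<rho> \<rho> + 3 * (1 - t powr m) / m * W a \<rho> \<rho> \<le> V a \<rho> \<rho>"
proof -
  define c where "c = 3 * (1 - t powr m) / m"
  define N where "N = real (nat \<lceil>1/t\<rceil>)"
  note diff = kernel_double_integral_diff[OF Kker_borel_measurable Kker_nonneg[OF a] \<rho>
      fin[unfolded Vnn_def]]
  \<comment> \<open>Domination by K_a is what makes the double integrals linear in the kernel.\<close>
  have Kt: "\<bar>t^3 * Kker (a * t) z\<bar> \<le> t^3 * N * Kker a z" for z
    using Kker_scaled_le[OF a t, of z] Kker_nonneg[of "a * t" z] a t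
    by (simp add: N_def mult.assoc)
  have N: "0 \<le> N"
    by (simp add: N_def)
  have K1: "\<bar>Kker a z - t^3 * Kker (a * t) z\<bar> \<le> (1 + t^3 * N) * Kker a z" for z
    using Kt[of z] Kker_nonneg[OF a, of z] by (simp add: distrib_right)
  have cL: "\<bar>c * Lker a z\<bar> \<le> \<bar>c\<bar> * Kker a z" for z
    using Lker_nonneg[OF a, of z] Lker_le_Kker[OF a, of z] by (simp add: abs_mult mult_left_mono)
  have "0 \<le> (LINT x|lebesgue. LINT y|lebesgue.
      (Kker a (x - y) - t^3 * Kker (a * t) (x - y) - c * Lker a (x - y)) * \<rho> x * \<rho> y)"
  proof (intro Bochner_Integration.integral_nonneg mult_nonneg_nonneg \<rho>(2))
    show "0 \<le> Kker a (x - y) - t^3 * Kker (a * t) (x - y) - c * Lker a (x - y)" for x y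
      using Kker_scaled_plus_Lker_le[OF a t m, of "x - y"] unfolding c_def by simp
  qed
  also have "\<dots> = (LINT x|lebesgue. LINT y|lebesgue.
      (Kker a (x - y) - t^3 * Kker (a * t) (x - y)) * \<rho> x * \<rho> y) - c * W a \<rho> \<rho>"
    using diff[where k="\<lambda>z. Kker a z - t^3 * Kker (a * t) z" and l="\<lambda>z. c * Lker a z",
        OF _ _ K1 _ _ cL] t N
    by (simp add: W_def mult.assoc)
  also have "\<dots> = V a \<rho> \<rho> - t^3 * V (a * t) \<rho> \<rho> - c * W a \<rho> \<rho>"
    using diff[where k="Kker a" and l="\<lambda>z. t^3 * Kker (a * t) z" and Ck=1, OF _ _ _ _ _ Kt]
      t N Kker_nonneg[OF a]
    by (simp add: V_def mult.assoc)
  finally show ?thesis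
    unfolding c_def by simp
qed

section \<open>The maximum along the fibering map\<close>

lemma I_a_dil_le:
  assumes a: "a > 0" and p: "p \<ge> 3" and t: "t > 0"
    and u: "u \<in> D12" "Vnn a (\<lambda>x. (u x)\<^sup>2) (\<lambda>x. (u x)\<^sup>2) < \<infinity>" and J: "J_a a q p u = 0"
  shows "I_a a q p (dil t u) \<le> I_a a q p u"
proof -
  define m where "m = 2 * p - 3"
  define \<rho> where "\<rho> x = (u x)\<^sup>2" for x
  have m: "m \<ge> 3"
    using p by (simp add: m_def)
  have "u \<in> borel_measurable lebesgue"
    using u(1) by (simp add: D12_def)
  then have \<rho>: "\<rho> \<in> borel_measurable lebesgue"
    unfolding \<rho>_def by measurable
  have Lp: "Lp_pow p u = p / m * (3/2 * grad_sq u + 3 * q\<^sup>2 / 4 * W a \<rho> \<rho>)"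
    using J p unfolding J_a_def m_def \<rho>_def by (simp add: field_simps)
  have Iu: "I_a a q p u = grad_sq u / 2 + q\<^sup>2 / 4 * V a \<rho> \<rho> - Lp_pow p u / p"
    by (simp add: I_a_def \<rho>_def[abs_def])
  have It: "I_a a q p (dil t u)
      = t^3 / 2 * grad_sq u + q\<^sup>2 / 4 * t^3 * V (a * t) \<rho> \<rho> - t powr m / p * Lp_pow p u"
    using I_a_dil[OF a t _ u(1), of p q] p by (simp add: m_def \<rho>_def[abs_def])
  have "I_a a q p u - I_a a q p (dil t u)
      = grad_sq u * ((1 - t^3) / 2 - 3 * (1 - t powr m) / (2 * m))
        + q\<^sup>2 / 4 * (V a \<rho> \<rho> - (t^3 * V (a * t) \<rho> \<rho> + 3 * (1 - t powr m) / m * W a \<rho> \<rho>))"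
    unfolding Iu It Lp using p m by (simp add: field_simps)
  also have "\<dots> \<ge> 0"
  proof (intro add_nonneg_nonneg mult_nonneg_nonneg)
    have "Vnn a \<rho> \<rho> < \<infinity>"
      using u(2) by (simp add: \<rho>_def[abs_def])
    then show "0 \<le> V a \<rho> \<rho> - (t^3 * V (a * t) \<rho> \<rho> + 3 * (1 - t powr m) / m * W a \<rho> \<rho>)"
      using V_scaled_plus_W_le[OF a t m \<rho>] by (simp add: \<rho>_def)
  qed (use grad_sq_nonneg dilation_gradient_factor_nonneg[OF t m] in simp_all)
  finally show ?thesis
    by simp
qed

theorem corollary5p2:
  fixes a q p :: real and u :: "R3 \<Rightarrow> real"
  assumes "a > 0" and "q \<noteq> 0" and "4 < p" and "p < 6"
    and "u \<in> M_ar a q p"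
  shows "(\<forall>t>0. I_a a q p (dil t u) \<le> I_a a q p u)
         \<and> I_a a q p u = (SUP t\<in>{0<..}. I_a a q p (dil t u))"
proof -
  have u: "u \<in> D12" "Vnn a (\<lambda>x. (u x)\<^sup>2) (\<lambda>x. (u x)\<^sup>2) < \<infinity>" "J_a a q p u = 0"
    using assms(5) by (auto simp: M_ar_def E_r_def)
  have le: "\<forall>t>0. I_a a q p (dil t u) \<le> I_a a q p u"
    using I_a_dil_le[OF assms(1) _ _ u] assms(3) by simp
  moreover have "(SUP t\<in>{0<..}. I_a a q p (dil t u)) = I_a a q p u"
  proof (rule cSup_eq_maximum)
    show "I_a a q p u \<in> (\<lambda>t. I_a a q p (dil t u)) ` {0<..}"
      by (rule image_eqI[of _ _ 1]) (simp_all add: dil_def)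
  qed (use le in auto)
  ultimately show ?thesis
    by simp
qed

end
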